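(* Let $\alpha_1,\dots,\alpha_4$ be given constants, $H=H(t,t^-,q,q^-,p,p^-)$ a smooth delay Hamiltonian, and $X=\xi(t,q,p)\partial_t+\eta(t,q,p)\partial_q+\nu(t,q,p)\partial_p$ a generator such that the Hamiltonian is invariant, i.e. $$\Omega:=\nu^{-}(\alpha_{1}\dot{q}+\alpha_{2}\dot{q}^{-})+p^{-}(\alpha_{1}D(\eta)+\alpha_{2}D(\eta^{-}))+\nu(\alpha_{3}\dot{q}+\alpha_{4}\dot{q}^{-})+p(\alpha_{3}D(\eta)+\alpha_{4}D(\eta^{-}))+(\alpha_{2}p^{-}+\alpha_{4}p)\dot{q}^{-}D(\xi-\xi^{-})-\xi H_t-\eta H_q-\nu H_p-\xi^{-}H_{t^-}-\eta^{-}H_{q^-}-\nu^{-}H_{p^-}-HD(\xi)=0.$$ Then on the solutions of the local extremal equation $$F_H=\xi\frac{\delta\tilde H}{\delta t}+\eta\frac{\delta\tilde H}{\delta q}+\nu\frac{\delta\tilde H}{\delta p}=0$$ the differential-difference relation $D(C)=(S_+-1)P$ holds, where $C=\eta(\alpha_{4}p^{+}+(\alpha_{2}+\alpha_{3})p+\alpha_{1}p^{-})-\xi\big(\alpha_{2}(p\dot{q}-p^{-}\dot{q}^{-})+\alpha_{4}(p^{+}\dot{q}-p\dot{q}^{-})+H\big)$ and $P=(\alpha_{2}p^{-}+\alpha_{4}p)D(\eta^{-})+\nu^{-}(\alpha_{1}\dot{q}+\alpha_{2}\dot{q}^{-})-(\alpha_{2}p^{-}+\alpha_{4}p)\dot{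q}^{-}D(\xi^{-})-\xi^{-}H_{t^-}-\eta^{-}H_{q^-}-\nu^{-}H_{p^-}$.
   Context: Constant delay $\tau>0$; $t^\pm=t\pm\tau$, and $f^\pm=f(t\pm\tau)$ for functions of $t$; scalar dependent variables $q,p$. $S_\pm$ are the forward/backward shift operators on expressions (shifting all arguments by one step: $S_+$ sends $t^-,t,q^-,q,p^-,p,\dots$ to $t,t^+,q,q^+,p,p^+,\dots$); $\xi^\pm=S_\pm(\xi)$ etc.; $H^+=S_+(H)$. $D$ is the total derivative acting on variables at the points $t^-,t,t^+$ ($D=\partial_t+\dot q\partial_q+\dot p\partial_p+\ddot q\partial_{\dot q}+\cdots$ plus the analogous terms at $t^-$ and $t^+$). $\tilde H=p^{-}(\alpha_{1}\dot{q}+\alpha_{2}\dot{q}^{-})+p(\alpha_{3}\dot{q}+\alpha_{4}\dot{q}^{-})-H$, with $\frac{\delta\tilde H}{\delta p}=\alpha_1\dot q^++(\alpha_2+\alpha_3)\dot q+\alpha_4\dot q^--\partial_p(H+H^+)$, $\frac{\delta\tilde H}{\delta q}=-\big(\alpha_4\dot p^++(\alpha_2+\alpha_3)\dot p+\alpha_1\dot p^-+\partial_q(H+H^+)\big)$, $\frac{\delta\tilde H}{\delta t}=D[\alpha_2(p\dot q-p^-\dot q^-)+\alpha_4(p^+\dot q-p\dot q^-)]+D(H)-\partial_t(H+H^+)$. The equation is considered together with the delay equation $t^+-t=t-t^-=\tau$. The quantity $\Omega$ equals $X(\tilde H)+\tilde HD(\xi)$ for the prolonged generator. *)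

theory Defs
  imports "HOL-Analysis.Analysis"
begin

type_synonym ham = "real \<Rightarrow> real \<Rightarrow> real \<Rightarrow> real \<Rightarrow> real \<Rightarrow> real \<Rightarrow> real"
  (* H(t, t^-, q, q^-, p, p^-) *)
type_synonym coef = "real \<Rightarrow> real \<Rightarrow> real \<Rightarrow> real"
  (* xi(t, q, p), eta(t, q, p), nu(t, q, p) *)

definition dH_t :: "ham \<Rightarrow> ham" where
  "dH_t H a b c d e f = deriv (\<lambda>s. H s b c d e f) a"
definition dH_tm :: "ham \<Rightarrow> ham" where
  "dH_tm H a b c d e f = deriv (\<lambda>s. H a s c d e f) b"
definition dH_q :: "ham \<Rightarrow> ham" where
  "dH_q H a b c d e f = deriv (\<lambda>s. H a b s d e f) c"
definition dH_qm :: "ham \<Rightarrow> ham" where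
  "dH_qm H a b c d e f = deriv (\<lambda>s. H a b c s e f) d"
definition dH_p :: "ham \<Rightarrow> ham" where
  "dH_p H a b c d e f = deriv (\<lambda>s. H a b c d s f) e"
definition dH_pm :: "ham \<Rightarrow> ham" where
  "dH_pm H a b c d e f = deriv (\<lambda>s. H a b c d e s) f"

definition at6 :: "ham \<Rightarrow> real \<Rightarrow> (real \<Rightarrow> real) \<Rightarrow> (real \<Rightarrow> real) \<Rightarrow> real \<Rightarrow> real" where
  "at6 G tau q p t = G t (t - tau) (q t) (q (t - tau)) (p t) (p (t - tau))"

definition at3 :: "coef \<Rightarrow> (real \<Rightarrow> real) \<Rightarrow> (real \<Rightarrow> real) \<Rightarrow> real \<Rightarrow> real" where
  "at3 g q p t = g t (q t) (p t)"

definition Omega ::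
  "real \<Rightarrow> real \<Rightarrow> real \<Rightarrow> real \<Rightarrow> ham \<Rightarrow> coef \<Rightarrow> coef \<Rightarrow> coef \<Rightarrow> real
   \<Rightarrow> (real \<Rightarrow> real) \<Rightarrow> (real \<Rightarrow> real) \<Rightarrow> real \<Rightarrow> real" where
  "Omega a1 a2 a3 a4 H xi eta nu tau q p t =
     at3 nu q p (t - tau) * (a1 * deriv q t + a2 * deriv q (t - tau))
   + p (t - tau) * (a1 * deriv (at3 eta q p) t + a2 * deriv (\<lambda>s. at3 eta q p (s - tau)) t)
   + at3 nu q p t * (a3 * deriv q t + a4 * deriv q (t - tau))
   + p t * (a3 * deriv (at3 eta q p) t + a4 * deriv (\<lambda>s. at3 eta q p (s - tau)) t)
   + (a2 * p (t - tau) + a4 * p t) * deriv q (t - tau)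
       * deriv (\<lambda>s. at3 xi q p s - at3 xi q p (s - tau)) t
   - at3 xi q p t * at6 (dH_t H) tau q p t
   - at3 eta q p t * at6 (dH_q H) tau q p t
   - at3 nu q p t * at6 (dH_p H) tau q p t
   - at3 xi q p (t - tau) * at6 (dH_tm H) tau q p t
   - at3 eta q p (t - tau) * at6 (dH_qm H) tau q p t
   - at3 nu q p (t - tau) * at6 (dH_pm H) tau q p t
   - at6 H tau q p t * deriv (at3 xi q p) t"

definition varH_p ::
  "real \<Rightarrow> real \<Rightarrow> real \<Rightarrow> real \<Rightarrow> ham \<Rightarrow> real \<Rightarrow> (real \<Rightarrow> real) \<Rightarrow> (real \<Rightarrow> real) \<Rightarrow> real \<Rightarrow> real" where
  "varH_p a1 a2 a3 a4 H tau q p t =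
     a1 * deriv q (t + tau) + (a2 + a3) * deriv q t + a4 * deriv q (t - tau)
   - (at6 (dH_p H) tau q p t + at6 (dH_pm H) tau q p (t + tau))"

definition varH_q ::
  "real \<Rightarrow> real \<Rightarrow> real \<Rightarrow> real \<Rightarrow> ham \<Rightarrow> real \<Rightarrow> (real \<Rightarrow> real) \<Rightarrow> (real \<Rightarrow> real) \<Rightarrow> real \<Rightarrow> real" where
  "varH_q a1 a2 a3 a4 H tau q p t =
     - (a4 * deriv p (t + tau) + (a2 + a3) * deriv p t + a1 * deriv p (t - tau)
        + at6 (dH_q H) tau q p t + at6 (dH_qm H) tau q p (t + tau))"

definition varH_t ::
  "real \<Rightarrow> real \<Rightarrow> real \<Rightarrow> real \<Rightarrow> ham \<Rightarrow> real \<Rightarrow> (real \<Rightarrow> real) \<Rightarrow> (real \<Rightarrow> real) \<Rightarrow> real \<Rightarrow> real" where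
  "varH_t a1 a2 a3 a4 H tau q p t =
     deriv (\<lambda>s. a2 * (p s * deriv q s - p (s - tau) * deriv q (s - tau))
              + a4 * (p (s + tau) * deriv q s - p s * deriv q (s - tau))) t
   + deriv (at6 H tau q p) t
   - (at6 (dH_t H) tau q p t + at6 (dH_tm H) tau q p (t + tau))"

definition F_H ::
  "real \<Rightarrow> real \<Rightarrow> real \<Rightarrow> real \<Rightarrow> ham \<Rightarrow> coef \<Rightarrow> coef \<Rightarrow> coef \<Rightarrow> real
   \<Rightarrow> (real \<Rightarrow> real) \<Rightarrow> (real \<Rightarrow> real) \<Rightarrow> real \<Rightarrow> real" where
  "F_H a1 a2 a3 a4 H xi eta nu tau q p t =
     at3 xi q p t * varH_t a1 a2 a3 a4 H tau q p t
   + at3 eta q p t * varH_q a1 a2 a3 a4 H tau q p t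
   + at3 nu q p t * varH_p a1 a2 a3 a4 H tau q p t"

definition Cdens ::
  "real \<Rightarrow> real \<Rightarrow> real \<Rightarrow> real \<Rightarrow> ham \<Rightarrow> coef \<Rightarrow> coef \<Rightarrow> real
   \<Rightarrow> (real \<Rightarrow> real) \<Rightarrow> (real \<Rightarrow> real) \<Rightarrow> real \<Rightarrow> real" where
  "Cdens a1 a2 a3 a4 H xi eta tau q p t =
     at3 eta q p t * (a4 * p (t + tau) + (a2 + a3) * p t + a1 * p (t - tau))
   - at3 xi q p t * (a2 * (p t * deriv q t - p (t - tau) * deriv q (t - tau))
                     + a4 * (p (t + tau) * deriv q t - p t * deriv q (t - tau))
                     + at6 H tau q p t)"

definition Pflux ::
  "real \<Rightarrow> real \<Rightarrow> real \<Rightarrow> real \<Rightarrow> ham \<Rightarrow> coef \<Rightarrow> coef \<Rightarrow> coef \<Rightarrow> real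
   \<Rightarrow> (real \<Rightarrow> real) \<Rightarrow> (real \<Rightarrow> real) \<Rightarrow> real \<Rightarrow> real" where
  "Pflux a1 a2 a3 a4 H xi eta nu tau q p t =
     (a2 * p (t - tau) + a4 * p t) * deriv (\<lambda>s. at3 eta q p (s - tau)) t
   + at3 nu q p (t - tau) * (a1 * deriv q t + a2 * deriv q (t - tau))
   - (a2 * p (t - tau) + a4 * p t) * deriv q (t - tau) * deriv (\<lambda>s. at3 xi q p (s - tau)) t
   - at3 xi q p (t - tau) * at6 (dH_tm H) tau q p t
   - at3 eta q p (t - tau) * at6 (dH_qm H) tau q p t
   - at3 nu q p (t - tau) * at6 (dH_pm H) tau q p t"

end

theory Submission
  imports Defs
begin

text \<open>
  Write \<open>C = \<eta> \<Pi> - \<xi> (K + H)\<close> with the conjugate momentum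
  \<open>\<Pi> = \<alpha>\<^sub>4 p\<^sup>+ + (\<alpha>\<^sub>2 + \<alpha>\<^sub>3) p + \<alpha>\<^sub>1 p\<^sup>-\<close> and
  \<open>K = \<alpha>\<^sub>2 (p q' - p\<^sup>- q'\<^sup>-) + \<alpha>\<^sub>4 (p\<^sup>+ q' - p q'\<^sup>-)\<close>.
  In the product rule for \<open>D C\<close>, the terms \<open>\<eta> D \<Pi>\<close> and \<open>\<xi> D (K + H)\<close>
  are exactly those occurring in \<open>\<eta> \<delta>H\<^sup>~/\<delta>q\<close> and \<open>\<xi> \<delta>H\<^sup>~/\<delta>t\<close>, and what is left
  rearranges into \<open>D C = (S\<^sub>+ - 1) P + \<Omega> - F\<^sub>H\<close>. This identity holds along every
  smooth trajectory, so \<open>\<Omega> = F\<^sub>H = 0\<close> gives the conservation law.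
\<close>

lemma differentiable_shift:
  fixes f :: "real \<Rightarrow> 'a::real_normed_vector"
  assumes "f differentiable (at (t + c))"
  shows "(\<lambda>s. f (s + c)) differentiable (at t)"
  using differentiable_chain_at[of "\<lambda>s. s + c" t f] assms by (simp add: o_def)

lemma differentiable_shift_minus:
  fixes f :: "real \<Rightarrow> 'a::real_normed_vector"
  assumes "f differentiable (at (t - c))"
  shows "(\<lambda>s. f (s - c)) differentiable (at t)"
  using differentiable_shift[of f t "- c"] assms by simp

lemma DERIV_shift_minus:
  "(f has_field_derivative y) (at (x - z)) \<Longrightarrow> ((\<lambda>x. f (x - z)) has_field_derivative y) (at x)"
  using DERIV_shift[of f y x "- z"] by simp

lemma deriv_shift_minus:
  fixes f :: "real \<Rightarrow> real"
  assumes "f differentiable (at (t - c))"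
  shows "deriv (\<lambda>s. f (s - c)) t = deriv f (t - c)"
  using assms by (intro DERIV_imp_deriv DERIV_shift_minus)
    (simp add: DERIV_deriv_iff_real_differentiable)

lemma at3_differentiable:
  assumes "q differentiable (at t)" "p differentiable (at t)"
    and "(\<lambda>(a, b, c). g a b c) differentiable (at (t, q t, p t))"
  shows "at3 g q p differentiable (at t)"
proof -
  have "(\<lambda>t. (t, q t, p t)) differentiable (at t)"
    using assms by (intro differentiable_Pair differentiable_ident) auto
  from differentiable_chain_at[OF this assms(3)]
  show ?thesis by (simp add: at3_def[abs_def] o_def)
qed

lemma at6_differentiable:
  assumes "q differentiable (at t)" "p differentiable (at t)"
    and "q differentiable (at (t - tau))" "p differentiable (at (t - tau))"
    and "(\<lambda>(a, b, c, d, e, f). H a b c d e f) differentiable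
           (at (t, t - tau, q t, q (t - tau), p t, p (t - tau)))"
  shows "at6 H tau q p differentiable (at t)"
proof -
  have "(\<lambda>t. (t, t - tau, q t, q (t - tau), p t, p (t - tau))) differentiable (at t)"
    using assms
    by (intro differentiable_Pair differentiable_ident differentiable_shift_minus
        differentiable_diff differentiable_const) auto
  from differentiable_chain_at[OF this assms(5)]
  show ?thesis by (simp add: at6_def[abs_def] o_def)
qed

definition conj_momentum ::
  "real \<Rightarrow> real \<Rightarrow> real \<Rightarrow> real \<Rightarrow> real \<Rightarrow> (real \<Rightarrow> real) \<Rightarrow> real \<Rightarrow> real" where
  "conj_momentum a1 a2 a3 a4 tau p t = a4 * p (t + tau) + (a2 + a3) * p t + a1 * p (t - tau)"

definition energy_correction ::
  "real \<Rightarrow> real \<Rightarrow> real \<Rightarrow> (real \<Rightarrow> real) \<Rightarrow> (real \<Rightarrow> real) \<Rightarrow> real \<Rightarrow> real" where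
  "energy_correction a2 a4 tau q p t =
     a2 * (p t * deriv q t - p (t - tau) * deriv q (t - tau))
   + a4 * (p (t + tau) * deriv q t - p t * deriv q (t - tau))"

lemma Cdens_eq:
  "Cdens a1 a2 a3 a4 H xi eta tau q p =
     (\<lambda>t. at3 eta q p t * conj_momentum a1 a2 a3 a4 tau p t
        - at3 xi q p t * (energy_correction a2 a4 tau q p t + at6 H tau q p t))"
  by (simp add: Cdens_def conj_momentum_def energy_correction_def fun_eq_iff)

lemma varH_t_eq:
  "varH_t a1 a2 a3 a4 H tau q p t =
     deriv (energy_correction a2 a4 tau q p) t + deriv (at6 H tau q p) t
   - (at6 (dH_t H) tau q p t + at6 (dH_tm H) tau q p (t + tau))"
  by (simp add: varH_t_def energy_correction_def[abs_def])

lemma conj_momentum_has_derivative: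
  assumes "\<And>t. p differentiable (at t)"
  shows "(conj_momentum a1 a2 a3 a4 tau p has_real_derivative
           a4 * deriv p (t + tau) + (a2 + a3) * deriv p t + a1 * deriv p (t - tau)) (at t)"
proof -
  have p': "(p has_real_derivative deriv p s) (at s)" for s
    using assms DERIV_deriv_iff_real_differentiable by blast
  have "((\<lambda>s. p (s + tau)) has_real_derivative deriv p (t + tau)) (at t)"
    using p' DERIV_shift by blast
  moreover have "((\<lambda>s. p (s - tau)) has_real_derivative deriv p (t - tau)) (at t)"
    using p' by (rule DERIV_shift_minus)
  ultimately show ?thesis
    unfolding conj_momentum_def[abs_def] using p' by (auto intro!: derivative_eq_intros)
qed

lemma energy_correction_differentiable:
  assumes "\<And>t. q differentiable (at t)" "\<And>t. p differentiable (at t)"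
    and "\<And>t. deriv q differentiable (at t)"
  shows "energy_correction a2 a4 tau q p differentiable (at t)"
  unfolding energy_correction_def[abs_def]
  using assms by (intro derivative_intros differentiable_shift differentiable_shift_minus) auto

lemma Noether_identity_deriv_Cdens:
  assumes H_smooth: "\<And>x. (\<lambda>(a, b, c, d, e, f). H a b c d e f) differentiable (at x)"
    and xi_smooth: "\<And>x. (\<lambda>(a, b, c). xi a b c) differentiable (at x)"
    and eta_smooth: "\<And>x. (\<lambda>(a, b, c). eta a b c) differentiable (at x)"
    and q_diff: "\<And>t. q differentiable (at t)"
    and p_diff: "\<And>t. p differentiable (at t)"
    and q'_diff: "\<And>t. deriv q differentiable (at t)"
  shows "deriv (Cdens a1 a2 a3 a4 H xi eta tau q p) t =
           Pflux a1 a2 a3 a4 H xi eta nu tau q p (t + tau)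
         - Pflux a1 a2 a3 a4 H xi eta nu tau q p t
         + Omega a1 a2 a3 a4 H xi eta nu tau q p t
         - F_H a1 a2 a3 a4 H xi eta nu tau q p t"
proof -
  have xi_diff: "at3 xi q p differentiable (at s)" for s
    using at3_differentiable q_diff p_diff xi_smooth by blast
  have eta_diff: "at3 eta q p differentiable (at s)" for s
    using at3_differentiable q_diff p_diff eta_smooth by blast
  have H_diff: "at6 H tau q p differentiable (at s)" for s
    using at6_differentiable q_diff p_diff H_smooth by blast
  have correction_diff: "energy_correction a2 a4 tau q p differentiable (at s)" for s
    using energy_correction_differentiable q_diff p_diff q'_diff by blast
  have DERIV_of: "(f has_real_derivative deriv f s) (at s)" if "f differentiable (at s)" for f s
    using that DERIV_deriv_iff_real_differentiable by blast
  have dC: "deriv (Cdens a1 a2 a3 a4 H xi eta tau q p) t =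
      deriv (at3 eta q p) t * conj_momentum a1 a2 a3 a4 tau p t
    + at3 eta q p t * (a4 * deriv p (t + tau) + (a2 + a3) * deriv p t + a1 * deriv p (t - tau))
    - deriv (at3 xi q p) t * (energy_correction a2 a4 tau q p t + at6 H tau q p t)
    - at3 xi q p t * (deriv (energy_correction a2 a4 tau q p) t + deriv (at6 H tau q p) t)"
    unfolding Cdens_eq
    by (intro DERIV_imp_deriv)
      (auto intro!: derivative_eq_intros DERIV_of xi_diff eta_diff H_diff correction_diff conj_momentum_has_derivative p_diff)
  have dX: "deriv (\<lambda>s. at3 xi q p s - at3 xi q p (s - tau)) t
      = deriv (at3 xi q p) t - deriv (at3 xi q p) (t - tau)"
    by (intro DERIV_imp_deriv)
      (auto intro!: derivative_eq_intros DERIV_of xi_diff DERIV_shift_minus)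
  show ?thesis
    unfolding dC dX Omega_def F_H_def varH_p_def varH_q_def varH_t_eq Pflux_def
    by (simp add: deriv_shift_minus eta_diff xi_diff conj_momentum_def energy_correction_def algebra_simps)
qed

theorem theorem5:
  fixes a1 a2 a3 a4 tau :: real
    and H :: ham and xi eta nu :: coef
    and q p :: "real \<Rightarrow> real"
  assumes tau_pos: "tau > 0"
    and H_smooth: "\<And>x. (\<lambda>(a, b, c, d, e, f). H a b c d e f) differentiable (at x)"
    and xi_smooth: "\<And>x. (\<lambda>(a, b, c). xi a b c) differentiable (at x)"
    and eta_smooth: "\<And>x. (\<lambda>(a, b, c). eta a b c) differentiable (at x)"
    and nu_smooth: "\<And>x. (\<lambda>(a, b, c). nu a b c) differentiable (at x)"
    and q_diff: "\<And>t. q differentiable (at t)"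
    and p_diff: "\<And>t. p differentiable (at t)"
    and q'_diff: "\<And>t. deriv q differentiable (at t)"
    and p'_diff: "\<And>t. deriv p differentiable (at t)"
    and invariant: "\<And>t. Omega a1 a2 a3 a4 H xi eta nu tau q p t = 0"
    and extremal: "\<And>t. F_H a1 a2 a3 a4 H xi eta nu tau q p t = 0"
  shows "\<forall>t. deriv (Cdens a1 a2 a3 a4 H xi eta tau q p) t
           = Pflux a1 a2 a3 a4 H xi eta nu tau q p (t + tau)
             - Pflux a1 a2 a3 a4 H xi eta nu tau q p t"
  using Noether_identity_deriv_Cdens[where nu = nu, OF H_smooth xi_smooth eta_smooth q_diff p_diff q'_diff]
    invariant extremal
  by simp

end
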